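(* Let $R$ be a commutative ring and let $0\to A\xrightarrow{f}B\xrightarrow{g}C\to 0$ be an exact sequence of $R$-modules. This sequence is $w$-split if and only if there exist $J=\langle d_1,\dots,d_n\rangle\in\mathrm{GV}(R)$ and $q_1,\dots,q_n\in\mathrm{Hom}_R(B,A)$ such that $q_kf=\eta^A_{d_k}$ for all $k=1,\dots,n$. Moreover, suppose $J=\langle d_1,\dots,d_n\rangle\in\mathrm{GV}(R)$ and $h_1,\dots,h_n\in\mathrm{Hom}_R(C,B)$ satisfy $gh_k=\eta^C_{d_k}$ for all $k$. Then there exist $q_k\in\mathrm{Hom}_R(B,A)$ with $q_kf=\eta^A_{d_k}$ and $\eta^B_{d_k}=fq_k+h_kg$ for each $k$.
   Context: $R$ is a commutative ring with identity. For an $R$-module $M$ and $s\in R$, $\eta^M_s:M\to M$ is multiplication by $s$. An ideal $J$ of $R$ is a GV-ideal if $J$ is finitely generated and the natural map $R\to\mathrm{Hom}_R(J,R)$ is an isomorphism; $\mathrm{GV}(R)$ is the set of GV-ideals. A short exact sequence $0\to A\xrightarrow{f}B\xrightarrow{g}C\to 0$ is $w$-split if there exist $J=\langle d_1,\dots,d_n\rangle\in\mathrm{GV}(R)$ and $h_1,\dots,h_n\in\mathrm{Hom}_R(C,B)$ with $gh_k=\eta^C_{d_k}$ for all $k$. *)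

theory Defs
  imports Main "HOL.Modules"
begin

text \<open>R is modelled by a type 'r of class comm_ring_1; an R-module is a type of class
ab_group_add together with a scalar multiplication satisfying the locale module.
A finite list ds = [d_1,...,d_n] of ring elements represents the generators of J.\<close>

definition gen_ideal :: "'r::comm_ring_1 list \<Rightarrow> 'r set" where
  "gen_ideal ds = {x. \<exists>c::nat \<Rightarrow> 'r. x = (\<Sum>i<length ds. c i * ds ! i)}"

definition ideal_hom_to_ring :: "'r::comm_ring_1 set \<Rightarrow> ('r \<Rightarrow> 'r) \<Rightarrow> bool" where
  "ideal_hom_to_ring J \<phi> \<longleftrightarrow>
     (\<forall>x\<in>J. \<forall>y\<in>J. \<phi> (x + y) = \<phi> x + \<phi> y) \<and> (\<forall>r. \<forall>x\<in>J. \<phi> (r * x) = r * \<phi> x)"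

text \<open>J = <ds> is a GV-ideal: the natural map R \<rightarrow> Hom_R(J,R), r \<mapsto> (x \<mapsto> r x),
is bijective (injective and surjective onto Hom_R(J,R)); J is finitely generated by construction.\<close>
definition GV_ideal :: "'r::comm_ring_1 list \<Rightarrow> bool" where
  "GV_ideal ds \<longleftrightarrow>
     (\<forall>r s. (\<forall>x\<in>gen_ideal ds. r * x = s * x) \<longrightarrow> r = s) \<and>
     (\<forall>\<phi>. ideal_hom_to_ring (gen_ideal ds) \<phi> \<longrightarrow> (\<exists>r. \<forall>x\<in>gen_ideal ds. \<phi> x = r * x))"

definition short_exact ::
  "('r::comm_ring_1 \<Rightarrow> 'a::ab_group_add \<Rightarrow> 'a) \<Rightarrow> ('r::comm_ring_1 \<Rightarrow> 'b::ab_group_add \<Rightarrow> 'b) \<Rightarrow>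
   ('r::comm_ring_1 \<Rightarrow> 'c::ab_group_add \<Rightarrow> 'c) \<Rightarrow> ('a \<Rightarrow> 'b) \<Rightarrow> ('b \<Rightarrow> 'c) \<Rightarrow> bool" where
  "short_exact sA sB sC f g \<longleftrightarrow>
     module_hom sA sB f \<and> module_hom sB sC g \<and> inj f \<and> surj g \<and> range f = {b. g b = 0}"

definition w_split ::
  "('r::comm_ring_1 \<Rightarrow> 'a::ab_group_add \<Rightarrow> 'a) \<Rightarrow> ('r::comm_ring_1 \<Rightarrow> 'b::ab_group_add \<Rightarrow> 'b) \<Rightarrow>
   ('r::comm_ring_1 \<Rightarrow> 'c::ab_group_add \<Rightarrow> 'c) \<Rightarrow> ('a \<Rightarrow> 'b) \<Rightarrow> ('b \<Rightarrow> 'c) \<Rightarrow> bool" where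
  "w_split sA sB sC f g \<longleftrightarrow>
     (\<exists>ds. GV_ideal ds \<and> (\<exists>h :: nat \<Rightarrow> 'c \<Rightarrow> 'b. \<forall>k<length ds.
        module_hom sC sB (h k) \<and> (\<forall>c. g (h k c) = sC (ds ! k) c)))"

end

theory Submission
  imports Defs
begin

text \<open>Given h, the map b \<mapsto> d b - h (g b) lands in ker g = im f and so factors through the
injection f, giving q; given q, the map b \<mapsto> d b - f (q b) kills ker g = im f and so factors
through the surjection g, giving h.\<close>

lemma module_hom_factor_through_inj:
  assumes f: "module_hom sA sB f" and "inj f"
    and \<phi>: "module_hom sX sB \<phi>" and "range \<phi> \<subseteq> range f"
  shows "\<exists>q. module_hom sX sA q \<and> (\<forall>x. f (q x) = \<phi> x)"
proof -
  define q where "q x = inv f (\<phi> x)" for x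
  have fq: "f (q x) = \<phi> x" for x
    unfolding q_def using \<open>range \<phi> \<subseteq> range f\<close> by (blast intro: f_inv_into_f)
  have "q (x + y) = q x + q y" for x y
    using \<open>inj f\<close> by (rule injD) (simp add: fq module_hom.add[OF f] module_hom.add[OF \<phi>])
  moreover have "q (sX r x) = sA r (q x)" for r x
    using \<open>inj f\<close> by (rule injD) (simp add: fq module_hom.scale[OF f] module_hom.scale[OF \<phi>])
  ultimately have "module_hom sX sA q"
    using f \<phi> by (simp add: module_hom_iff)
  with fq show ?thesis by blast
qed

lemma module_hom_factor_through_surj:
  assumes g: "module_hom sB sC g" and "surj g"
    and \<phi>: "module_hom sB sY \<phi>" and ker: "\<And>b. g b = 0 \<Longrightarrow> \<phi> b = 0"
  shows "\<exists>h. module_hom sC sY h \<and> (\<forall>b. h (g b) = \<phi> b)"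
proof -
  have \<phi>_fibre: "\<phi> x = \<phi> y" if "g x = g y" for x y
    using ker[of "x - y"] that
    by (simp add: module_hom.diff[OF g] module_hom.diff[OF \<phi>])
  define h where "h c = \<phi> (inv g c)" for c
  have hg: "h (g b) = \<phi> b" for b
    unfolding h_def by (rule \<phi>_fibre) (simp add: \<open>surj g\<close> surj_f_inv_f)
  have g_inv: "c = g (inv g c)" for c
    using \<open>surj g\<close> by (simp add: surj_f_inv_f)
  have "h (x + y) = h x + h y" for x y
    using hg[of "inv g x + inv g y"]
    by (simp add: module_hom.add[OF g] module_hom.add[OF \<phi>] flip: g_inv) (simp add: h_def)
  moreover have "h (sC r x) = sY r (h x)" for r x
    using hg[of "sB r (inv g x)"]
    by (simp add: module_hom.scale[OF g] module_hom.scale[OF \<phi>] flip: g_inv) (simp add: h_def)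
  ultimately have "module_hom sC sY h"
    using g \<phi> by (simp add: module_hom_iff)
  with hg show ?thesis by blast
qed

lemma module_hom_scale_diff:
  assumes "module_hom s s u"
  shows "module_hom s s (\<lambda>x. s d x - u x)"
  using assms module_hom.axioms(1)[OF assms]
  by (auto intro: module_pair.module_hom_sub module.module_hom_scale_self simp: module_pair_def)

lemma short_exact_section_imp_retraction:
  assumes se: "short_exact sA sB sC f g"
    and h: "module_hom sC sB h" and gh: "\<forall>c. g (h c) = sC d c"
  shows "\<exists>q. module_hom sB sA q \<and> (\<forall>a. q (f a) = sA d a) \<and> (\<forall>b. sB d b = f (q b) + h (g b))"
proof -
  have f: "module_hom sA sB f" and g: "module_hom sB sC g" and "inj f"
    and im_f: "range f = {b. g b = 0}"
    using se by (auto simp: short_exact_def)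
  define \<phi> where "\<phi> b = sB d b - h (g b)" for b
  have "module_hom sB sB \<phi>"
    unfolding \<phi>_def using module_hom_scale_diff[OF module_hom_compose[OF g h]]
    by (simp add: comp_def)
  moreover have "range \<phi> \<subseteq> range f"
    unfolding im_f \<phi>_def by (auto simp: gh module_hom.diff[OF g] module_hom.scale[OF g])
  ultimately obtain q where q: "module_hom sB sA q" and fq: "\<forall>b. f (q b) = \<phi> b"
    using module_hom_factor_through_inj[OF f \<open>inj f\<close>] by blast
  have "q (f a) = sA d a" for a
  proof (rule injD[OF \<open>inj f\<close>])
    have "g (f a) = 0" using im_f by auto
    then show "f (q (f a)) = f (sA d a)"
      by (simp add: fq \<phi>_def module_hom.scale[OF f] module_hom.zero[OF h])
  qed
  with q fq show ?thesis by (auto simp: \<phi>_def)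
qed

lemma short_exact_retraction_imp_section:
  assumes se: "short_exact sA sB sC f g"
    and q: "module_hom sB sA q" and qf: "\<forall>a. q (f a) = sA d a"
  shows "\<exists>h. module_hom sC sB h \<and> (\<forall>c. g (h c) = sC d c)"
proof -
  have f: "module_hom sA sB f" and g: "module_hom sB sC g" and "surj g"
    and im_f: "range f = {b. g b = 0}"
    using se by (auto simp: short_exact_def)
  define \<phi> where "\<phi> b = sB d b - f (q b)" for b
  have "module_hom sB sB \<phi>"
    unfolding \<phi>_def using module_hom_scale_diff[OF module_hom_compose[OF q f]]
    by (simp add: comp_def)
  moreover have "\<phi> b = 0" if "g b = 0" for b
  proof -
    from that obtain a where "b = f a" using im_f by blast
    then show ?thesis by (simp add: \<phi>_def qf module_hom.scale[OF f])
  qed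
  ultimately obtain h where h: "module_hom sC sB h" and hg: "\<forall>b. h (g b) = \<phi> b"
    using module_hom_factor_through_surj[OF g \<open>surj g\<close>] by blast
  have "g (h c) = sC d c" for c
  proof -
    obtain b where "c = g b" using \<open>surj g\<close> by blast
    moreover have "g (f (q b)) = 0" using im_f by auto
    ultimately show ?thesis
      by (simp add: hg \<phi>_def module_hom.diff[OF g] module_hom.scale[OF g])
  qed
  with h show ?thesis by blast
qed

lemma short_exact_sections_imp_retractions:
  assumes "short_exact sA sB sC f g"
    and "\<forall>k<n. module_hom sC sB (h k) \<and> (\<forall>c. g (h k c) = sC (d k) c)"
  shows "\<exists>q. \<forall>k<n. module_hom sB sA (q k) \<and> (\<forall>a. q k (f a) = sA (d k) a) \<and>
      (\<forall>b. sB (d k) b = f (q k b) + h k (g b))"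
proof -
  have "\<forall>k\<in>{..<n}. \<exists>q. module_hom sB sA q \<and> (\<forall>a. q (f a) = sA (d k) a) \<and>
      (\<forall>b. sB (d k) b = f (q b) + h k (g b))"
    using assms short_exact_section_imp_retraction by blast
  from bchoice[OF this] show ?thesis by auto
qed

lemma short_exact_retractions_imp_sections:
  assumes "short_exact sA sB sC f g"
    and "\<forall>k<n. module_hom sB sA (q k) \<and> (\<forall>a. q k (f a) = sA (d k) a)"
  shows "\<exists>h. \<forall>k<n. module_hom sC sB (h k) \<and> (\<forall>c. g (h k c) = sC (d k) c)"
proof -
  have "\<forall>k\<in>{..<n}. \<exists>h. module_hom sC sB h \<and> (\<forall>c. g (h c) = sC (d k) c)"
    using assms short_exact_retraction_imp_section by blast
  from bchoice[OF this] show ?thesis by auto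
qed

lemma w_split_iff_GV_retractions:
  assumes "short_exact sA sB sC f g"
  shows "w_split sA sB sC f g \<longleftrightarrow>
    (\<exists>ds. GV_ideal ds \<and> (\<exists>q. \<forall>k<length ds.
       module_hom sB sA (q k) \<and> (\<forall>a. q k (f a) = sA (ds ! k) a)))"
proof
  assume "w_split sA sB sC f g"
  then obtain ds h where "GV_ideal ds"
    and sections: "\<forall>k<length ds. module_hom sC sB (h k) \<and> (\<forall>c. g (h k c) = sC (ds ! k) c)"
    unfolding w_split_def by blast
  with short_exact_sections_imp_retractions[OF assms sections]
  show "\<exists>ds. GV_ideal ds \<and> (\<exists>q. \<forall>k<length ds.
      module_hom sB sA (q k) \<and> (\<forall>a. q k (f a) = sA (ds ! k) a))"
    by blast
next
  assume "\<exists>ds. GV_ideal ds \<and> (\<exists>q. \<forall>k<length ds.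
      module_hom sB sA (q k) \<and> (\<forall>a. q k (f a) = sA (ds ! k) a))"
  then obtain ds q where "GV_ideal ds"
    and retractions: "\<forall>k<length ds. module_hom sB sA (q k) \<and> (\<forall>a. q k (f a) = sA (ds ! k) a)"
    by blast
  with short_exact_retractions_imp_sections[OF assms retractions]
  show "w_split sA sB sC f g"
    unfolding w_split_def by blast
qed

theorem proposition2p3:
  fixes sA :: "'r::comm_ring_1 \<Rightarrow> 'a::ab_group_add \<Rightarrow> 'a"
    and sB :: "'r \<Rightarrow> 'b::ab_group_add \<Rightarrow> 'b"
    and sC :: "'r \<Rightarrow> 'c::ab_group_add \<Rightarrow> 'c"
    and f :: "'a \<Rightarrow> 'b" and g :: "'b \<Rightarrow> 'c"
  assumes "module sA" and "module sB" and "module sC"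
    and "short_exact sA sB sC f g"
  shows "(w_split sA sB sC f g \<longleftrightarrow>
           (\<exists>ds. GV_ideal ds \<and> (\<exists>q :: nat \<Rightarrow> 'b \<Rightarrow> 'a. \<forall>k<length ds.
              module_hom sB sA (q k) \<and> (\<forall>a. q k (f a) = sA (ds ! k) a))))
       \<and> (\<forall>ds (h :: nat \<Rightarrow> 'c \<Rightarrow> 'b). GV_ideal ds \<and>
            (\<forall>k<length ds. module_hom sC sB (h k) \<and> (\<forall>c. g (h k c) = sC (ds ! k) c)) \<longrightarrow>
            (\<exists>q :: nat \<Rightarrow> 'b \<Rightarrow> 'a. \<forall>k<length ds.
               module_hom sB sA (q k) \<and> (\<forall>a. q k (f a) = sA (ds ! k) a) \<and>
               (\<forall>b. sB (ds ! k) b = f (q k b) + h k (g b))))"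
  by (simp add: w_split_iff_GV_retractions[OF assms(4)]
      short_exact_sections_imp_retractions[OF assms(4)])

end
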